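(* Let $\boldsymbol{f}\in\mathbb{R}^E$ route the demand $\boldsymbol{d}$ ($\mathbf{B}^\top\boldsymbol{f}=\boldsymbol{d}$) with $\boldsymbol{u}^-_e<\boldsymbol{f}_e<\boldsymbol{u}^+_e$ for all $e$ and $\boldsymbol{c}^\top\boldsymbol{f}>F^*$. Let $\tilde{\boldsymbol{g}}\in\mathbb{R}^E$ satisfy $\|\mathbf{L}(\boldsymbol{f})^{-1}(\tilde{\boldsymbol{g}}-\boldsymbol{g}(\boldsymbol{f}))\|_\infty\le\varepsilon$ for some $\varepsilon<\alpha/2$, and $\tilde{\boldsymbol{\ell}}\in\mathbb{R}^E_{>0}$ satisfy $\tilde{\boldsymbol{\ell}}\approx_2\boldsymbol{\ell}(\boldsymbol{f})$. If $\Phi(\boldsymbol{f})\le200m\log(mU)$ and $\log(\boldsymbol{c}^\top\boldsymbol{f}-F^* )\ge-10\log(mU)$, then $\frac{\tilde{\boldsymbol{g}}^\top(\boldsymbol{f}^*-\boldsymbol{f})}{100m+\|\tilde{\mathbf{L}}(\boldsymbol{f}^*-\boldsymbol{f})\|_1}\le-\alpha/4$, where $\boldsymbol{f}^*$ is an optimal (min-cost) flow.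
   Context: Setting: $G=(V,E)$ is a directed graph with $m=|E|$ edges and edge-vertex incidence matrix $\mathbf{B}$ (row of edge $(a,b)$ has $+1$ at $a$, $-1$ at $b$); demands $\boldsymbol{d}\in\mathbb{Z}^V$, lower/upper capacities $\boldsymbol{u}^-,\boldsymbol{u}^+\in\mathbb{Z}^E$, and costs $\boldsymbol{c}\in\mathbb{Z}^E$ are integers bounded in absolute value by $U$. $\boldsymbol{f}^*\in\arg\min\{\boldsymbol{c}^\top\boldsymbol{f}:\mathbf{B}^\top\boldsymbol{f}=\boldsymbol{d},\ \boldsymbol{u}^-\le\boldsymbol{f}\le\boldsymbol{u}^+\}$ and $F^*=\boldsymbol{c}^\top\boldsymbol{f}^*$. Let $\alpha=1/(1000\log(mU))$ and $\Phi(\boldsymbol{f})=20m\log(\boldsymbol{c}^\top\boldsymbol{f}-F^* )+\sum_{e}\big((\boldsymbol{u}^+_e-\boldsymbol{f}_e)^{-\alpha}+(\boldsymbol{f}_e-\boldsymbol{u}^-_e)^{-\alpha}\big)$. Lengths $\boldsymbol{\ell}(\boldsymbol{f})_e=(\boldsymbol{u}^+_e-\boldsymbol{f}_e)^{-1-\alpha}+(\boldsymbol{f}_e-\boldsymbol{u}^-_e)^{-1-\alpha}$; gradients $\boldsymbol{g}(\boldsymbol{f})=\nabla\Phi(\boldsymbol{f})$, i.e. $\boldsymbol{g}(\boldsymbol{f})_e=20m(\boldsymbol{c}^\top\boldsymbol{f}-F^* )^{-1}\boldsymbol{c}_e+\alpha(\boldsymbol{u}^+_e-\boldsymbol{f}_e)^{-1-\alpha}-\alpha(\boldsymbol{f}_e-\boldsymbol{u}^-_e)^{-1-\alpha}$.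 $\mathbf{L}(\boldsymbol{f})=\mathrm{diag}(\boldsymbol{\ell}(\boldsymbol{f}))$, $\tilde{\mathbf{L}}=\mathrm{diag}(\tilde{\boldsymbol{\ell}})$. $\boldsymbol{x}\approx_\beta\boldsymbol{y}$ means $\beta^{-1}\boldsymbol{y}_i\le\boldsymbol{x}_i\le\beta\boldsymbol{y}_i$ for all $i$. *)

theory Defs
  imports Complex_Main "HOL-Library.Cardinality"
begin

definition incidence :: "('e \<Rightarrow> 'v) \<Rightarrow> ('e \<Rightarrow> 'v) \<Rightarrow> 'e \<Rightarrow> 'v \<Rightarrow> real" where
  "incidence tail head e v = (if v = tail e then 1 else 0) - (if v = head e then 1 else 0)"

definition routes :: "('e::finite \<Rightarrow> 'v) \<Rightarrow> ('e \<Rightarrow> 'v) \<Rightarrow> ('v \<Rightarrow> int) \<Rightarrow> ('e \<Rightarrow> real) \<Rightarrow> bool" where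
  "routes tail head d f \<longleftrightarrow> (\<forall>v. (\<Sum>e\<in>UNIV. incidence tail head e v * f e) = real_of_int (d v))"

definition feasible_flow :: "('e::finite \<Rightarrow> 'v) \<Rightarrow> ('e \<Rightarrow> 'v) \<Rightarrow> ('v \<Rightarrow> int) \<Rightarrow> ('e \<Rightarrow> int) \<Rightarrow> ('e \<Rightarrow> int) \<Rightarrow> ('e \<Rightarrow> real) \<Rightarrow> bool" where
  "feasible_flow tail head d ulo uhi f \<longleftrightarrow> routes tail head d f \<and> (\<forall>e. real_of_int (ulo e) \<le> f e \<and> f e \<le> real_of_int (uhi e))"

definition cost :: "('e::finite \<Rightarrow> int) \<Rightarrow> ('e \<Rightarrow> real) \<Rightarrow> real" where
  "cost c f = (\<Sum>e\<in>UNIV. real_of_int (c e) * f e)"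

definition is_min_cost_flow :: "('e::finite \<Rightarrow> 'v) \<Rightarrow> ('e \<Rightarrow> 'v) \<Rightarrow> ('v \<Rightarrow> int) \<Rightarrow> ('e \<Rightarrow> int) \<Rightarrow> ('e \<Rightarrow> int) \<Rightarrow> ('e \<Rightarrow> int) \<Rightarrow> ('e \<Rightarrow> real) \<Rightarrow> bool" where
  "is_min_cost_flow tail head d ulo uhi c fs \<longleftrightarrow> feasible_flow tail head d ulo uhi fs \<and>
     (\<forall>f. feasible_flow tail head d ulo uhi f \<longrightarrow> cost c fs \<le> cost c f)"

text \<open>alpha = 1/(1000 log(mU)), log = natural logarithm\<close>
definition alpha :: "nat \<Rightarrow> real \<Rightarrow> real" where
  "alpha m U = 1 / (1000 * ln (real m * U))"

definition Phi :: "real \<Rightarrow> ('e::finite \<Rightarrow> int) \<Rightarrow> ('e \<Rightarrow> int) \<Rightarrow> ('e \<Rightarrow> int) \<Rightarrow> real \<Rightarrow> ('e \<Rightarrow> real) \<Rightarrow> real" where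
  "Phi a ulo uhi c Fs f = 20 * real CARD('e) * ln (cost c f - Fs) +
     (\<Sum>e\<in>UNIV. (real_of_int (uhi e) - f e) powr (-a) + (f e - real_of_int (ulo e)) powr (-a))"

definition lengths :: "real \<Rightarrow> ('e \<Rightarrow> int) \<Rightarrow> ('e \<Rightarrow> int) \<Rightarrow> ('e \<Rightarrow> real) \<Rightarrow> 'e \<Rightarrow> real" where
  "lengths a ulo uhi f e = (real_of_int (uhi e) - f e) powr (-1 - a) + (f e - real_of_int (ulo e)) powr (-1 - a)"

definition grad :: "real \<Rightarrow> ('e::finite \<Rightarrow> int) \<Rightarrow> ('e \<Rightarrow> int) \<Rightarrow> ('e \<Rightarrow> int) \<Rightarrow> real \<Rightarrow> ('e \<Rightarrow> real) \<Rightarrow> 'e \<Rightarrow> real" where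
  "grad a ulo uhi c Fs f e = 20 * real CARD('e) / (cost c f - Fs) * real_of_int (c e)
     + a * (real_of_int (uhi e) - f e) powr (-1 - a) - a * (f e - real_of_int (ulo e)) powr (-1 - a)"

definition approx_within :: "real \<Rightarrow> ('e \<Rightarrow> real) \<Rightarrow> ('e \<Rightarrow> real) \<Rightarrow> bool" where
  "approx_within \<beta> x y \<longleftrightarrow> (\<forall>i. y i / \<beta> \<le> x i \<and> x i \<le> \<beta> * y i)"

end

theory Submission
  imports Defs
begin

text \<open>Against the direction \<open>f* - f\<close>, the cost part of \<open>g(f)\<close> contributes exactly
  \<open>-20m\<close>, since \<open>c\<^sup>T(f* - f) = -(c\<^sup>T f - F*)\<close>. As \<open>f*\<close> lies in the capacity box,
  the barrier part of each edge contributes at most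
  \<open>2\<alpha>((u\<^sup>+ - f)\<^sup>-\<^sup>\<alpha> + (f - u\<^sup>-)\<^sup>-\<^sup>\<alpha>) - \<alpha> \<ell>(f) |f* - f|\<close>; summed, the first terms are
  \<open>2\<alpha>\<close> times the barrier part of \<open>\<Phi>\<close>, which the bounds on \<open>\<Phi>\<close> and on the gap keep below
  \<open>0.8m\<close>. The gradient error costs at most \<open>(\<alpha>/2)\<parallel>L(f* - f)\<parallel>\<^sub>1\<close> and \<open>\<ell>~ \<le> 2\<ell>(f)\<close>,
  so the numerator is at most \<open>-19.2m - (\<alpha>/2)\<parallel>L(f* - f)\<parallel>\<^sub>1\<close>, which beats
  \<open>-(\<alpha>/4)(100m + \<parallel>L~(f* - f)\<parallel>\<^sub>1)\<close> because \<open>\<alpha> \<le> 1/500\<close>.\<close>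

definition barrier :: "real \<Rightarrow> ('e::finite \<Rightarrow> int) \<Rightarrow> ('e \<Rightarrow> int) \<Rightarrow> ('e \<Rightarrow> real) \<Rightarrow> real" where
  "barrier a ulo uhi f =
     (\<Sum>e\<in>UNIV. (real_of_int (uhi e) - f e) powr (-a) + (f e - real_of_int (ulo e)) powr (-a))"

lemma Phi_eq_barrier:
  fixes f :: "'e::finite \<Rightarrow> real"
  shows "Phi a ulo uhi c Fs f = 20 * real CARD('e) * ln (cost c f - Fs) + barrier a ulo uhi f"
  by (simp add: Phi_def barrier_def)

lemma barrier_le_if_Phi_le:
  fixes f :: "'e::finite \<Rightarrow> real"
  assumes "Phi a ulo uhi c Fs f \<le> 200 * real CARD('e) * K" and "-10 * K \<le> ln (cost c f - Fs)"
  shows "barrier a ulo uhi f \<le> 400 * real CARD('e) * K"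
proof -
  have "barrier a ulo uhi f = Phi a ulo uhi c Fs f - 20 * real CARD('e) * ln (cost c f - Fs)"
    by (simp add: Phi_eq_barrier)
  also have "\<dots> \<le> 200 * real CARD('e) * K - 20 * real CARD('e) * (-10 * K)"
    using assms by (intro diff_mono mult_left_mono) auto
  finally show ?thesis by (simp add: algebra_simps)
qed

lemma alpha_posD:
  fixes m U :: nat
  assumes "alpha m (real U) > 0"
  shows "alpha m (real U) * ln (real m * real U) = 1 / 1000" and "alpha m (real U) \<le> 1 / 500"
proof -
  have ln_pos: "ln (real m * real U) > 0"
    using assms by (simp add: alpha_def zero_less_mult_iff)
  then show "alpha m (real U) * ln (real m * real U) = 1 / 1000" by (simp add: alpha_def)
  have "real m * real U \<noteq> 0" using ln_pos by (metis ln_0 less_irrefl)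
  then have "1 < real m * real U" using ln_pos by simp
  then have two: "2 \<le> real m * real U"
    by (metis of_nat_mult of_nat_1 of_nat_less_iff Suc_leI one_add_one of_nat_Suc of_nat_le_iff add.commute)
  have "ln (1 / 2 :: real) \<le> 1 / 2 - 1" by (rule ln_le_minus_one) simp
  then have "1 / 2 \<le> ln (2 :: real)" by (simp add: ln_div)
  also have "\<dots> \<le> ln (real m * real U)" using two by simp
  finally show "alpha m (real U) \<le> 1 / 500" by (simp add: alpha_def pos_divide_le_eq)
qed

lemma alpha_barrier_le_if_Phi_le:
  fixes f :: "'e::finite \<Rightarrow> real" and U :: nat
  defines "\<alpha> \<equiv> alpha CARD('e) (real U)"
  assumes "\<alpha> > 0"
    and "Phi \<alpha> ulo uhi c Fs f \<le> 200 * real CARD('e) * ln (real CARD('e) * real U)"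
    and "-10 * ln (real CARD('e) * real U) \<le> ln (cost c f - Fs)"
  shows "\<alpha> * barrier \<alpha> ulo uhi f \<le> 2 / 5 * real CARD('e)"
proof -
  have "\<alpha> * barrier \<alpha> ulo uhi f \<le> \<alpha> * (400 * real CARD('e) * ln (real CARD('e) * real U))"
    using assms barrier_le_if_Phi_le by (intro mult_left_mono) auto
  also have "\<dots> = 400 * real CARD('e) * (\<alpha> * ln (real CARD('e) * real U))" by simp
  also have "\<dots> = 2 / 5 * real CARD('e)"
    using alpha_posD(1)[of "CARD('e)" U] assms(2) unfolding \<alpha>_def by simp
  finally show ?thesis .
qed

lemma lengths_pos:
  assumes "real_of_int (ulo e) < f e" "f e < real_of_int (uhi e)"
  shows "lengths a ulo uhi f e > 0"
  using assms by (simp add: lengths_def add_pos_pos)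

lemma barrier_step_bound:
  fixes x y D q :: real
  assumes "x > 0" "y > 0" "-y \<le> D" "D \<le> x"
  shows "(x powr (-1 - q) - y powr (-1 - q)) * D + (x powr (-1 - q) + y powr (-1 - q)) * \<bar>D\<bar>
    \<le> 2 * (x powr (-q) + y powr (-q))"
proof -
  have powr_step: "z powr (-1 - q) * z = z powr (-q)" if "z > 0" for z :: real
  proof -
    have "z powr (-1 - q) * z = z powr (-1 - q) * z powr 1" using that by simp
    also have "\<dots> = z powr (-q)" unfolding powr_add[symmetric] by simp
    finally show ?thesis .
  qed
  show ?thesis
  proof (cases "D \<ge> 0")
    case True
    have "(x powr (-1 - q) - y powr (-1 - q)) * D + (x powr (-1 - q) + y powr (-1 - q)) * \<bar>D\<bar>
        = 2 * (x powr (-1 - q) * D)" using True by (simp add: algebra_simps)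
    also have "\<dots> \<le> 2 * (x powr (-1 - q) * x)" using assms(4) by (intro mult_left_mono) auto
    also have "\<dots> = 2 * x powr (-q)" using powr_step assms(1) by simp
    also have "\<dots> \<le> 2 * (x powr (-q) + y powr (-q))" by simp
    finally show ?thesis .
  next
    case False
    have "(x powr (-1 - q) - y powr (-1 - q)) * D + (x powr (-1 - q) + y powr (-1 - q)) * \<bar>D\<bar>
        = 2 * (y powr (-1 - q) * -D)" using False by (simp add: algebra_simps)
    also have "\<dots> \<le> 2 * (y powr (-1 - q) * y)" using assms(3) by (intro mult_left_mono) auto
    also have "\<dots> = 2 * y powr (-q)" using powr_step assms(2) by simp
    also have "\<dots> \<le> 2 * (x powr (-q) + y powr (-q))" by simp
    finally show ?thesis .
  qed
qed

lemma grad_inner_step_le: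
  fixes f g :: "'e::finite \<Rightarrow> real"
  assumes inside: "\<forall>e. real_of_int (ulo e) < f e \<and> f e < real_of_int (uhi e)"
    and box: "\<forall>e. real_of_int (ulo e) \<le> g e \<and> g e \<le> real_of_int (uhi e)"
    and gap: "cost c f \<noteq> cost c g" and "a \<ge> 0"
  shows "(\<Sum>e\<in>UNIV. grad a ulo uhi c (cost c g) f e * (g e - f e))
    \<le> - 20 * real CARD('e) + 2 * a * barrier a ulo uhi f
       - a * (\<Sum>e\<in>UNIV. lengths a ulo uhi f e * \<bar>g e - f e\<bar>)"
proof -
  define k where "k = 20 * real CARD('e) / (cost c f - cost c g)"
  define B where
    "B e = (real_of_int (uhi e) - f e) powr (-a) + (f e - real_of_int (ulo e)) powr (-a)" for e
  define P where "P e = (real_of_int (uhi e) - f e) powr (-1 - a)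
    - (f e - real_of_int (ulo e)) powr (-1 - a)" for e
  have split: "grad a ulo uhi c (cost c g) f e * (g e - f e)
      = k * (real_of_int (c e) * g e - real_of_int (c e) * f e) + a * (P e * (g e - f e))" for e
    by (simp add: grad_def k_def P_def algebra_simps)
  have "(\<Sum>e\<in>UNIV. k * (real_of_int (c e) * g e - real_of_int (c e) * f e)) = k * (cost c g - cost c f)"
    by (simp only: cost_def sum_subtractf[symmetric] sum_distrib_left)
  also have "\<dots> = - 20 * real CARD('e)" using gap by (simp add: k_def field_simps)
  finally have linear: "(\<Sum>e\<in>UNIV. k * (real_of_int (c e) * g e - real_of_int (c e) * f e))
    = - 20 * real CARD('e)" .
  have "P e * (g e - f e) \<le> 2 * B e - lengths a ulo uhi f e * \<bar>g e - f e\<bar>" for e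
    using barrier_step_bound[of "real_of_int (uhi e) - f e" "f e - real_of_int (ulo e)" "g e - f e" a]
      inside box by (auto simp: P_def B_def lengths_def)
  then have "(\<Sum>e\<in>UNIV. a * (P e * (g e - f e)))
      \<le> (\<Sum>e\<in>UNIV. a * (2 * B e - lengths a ulo uhi f e * \<bar>g e - f e\<bar>))"
    using \<open>a \<ge> 0\<close> by (intro sum_mono mult_left_mono)
  also have "\<dots> = 2 * a * barrier a ulo uhi f - a * (\<Sum>e\<in>UNIV. lengths a ulo uhi f e * \<bar>g e - f e\<bar>)"
    unfolding barrier_def B_def[symmetric]
    by (simp add: sum_distrib_left sum_subtractf right_diff_distrib mult.assoc mult.left_commute)
  finally show ?thesis by (simp add: split sum.distrib linear)
qed

lemma inner_le_if_grad_close: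
  fixes gt G L D :: "'e \<Rightarrow> real"
  assumes "\<And>e. \<bar>gt e - G e\<bar> \<le> \<epsilon> * L e"
  shows "(\<Sum>e\<in>A. gt e * D e) \<le> (\<Sum>e\<in>A. G e * D e) + \<epsilon> * (\<Sum>e\<in>A. L e * \<bar>D e\<bar>)"
proof -
  have "gt e * D e \<le> G e * D e + \<epsilon> * (L e * \<bar>D e\<bar>)" for e
  proof -
    have "(gt e - G e) * D e \<le> \<bar>gt e - G e\<bar> * \<bar>D e\<bar>" by (metis abs_ge_self abs_mult)
    also have "\<dots> \<le> \<epsilon> * L e * \<bar>D e\<bar>" using assms[of e] by (simp add: mult_right_mono)
    finally show ?thesis by (simp add: algebra_simps)
  qed
  then have "(\<Sum>e\<in>A. gt e * D e) \<le> (\<Sum>e\<in>A. G e * D e + \<epsilon> * (L e * \<bar>D e\<bar>))"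
    by (rule sum_mono)
  then show ?thesis by (simp add: sum.distrib sum_distrib_left)
qed

lemma sum_abs_weighted_le_if_approx:
  assumes "approx_within \<beta> w w'"
  shows "(\<Sum>i\<in>A. w i * \<bar>v i\<bar>) \<le> \<beta> * (\<Sum>i\<in>A. w' i * \<bar>v i\<bar>)"
  unfolding sum_distrib_left
proof (rule sum_mono)
  fix i
  have "w i \<le> \<beta> * w' i" using assms by (simp add: approx_within_def)
  then show "w i * \<bar>v i\<bar> \<le> \<beta> * (w' i * \<bar>v i\<bar>)" by (simp add: mult_right_mono flip: mult.assoc)
qed

lemma progress_ratio_le:
  fixes N S SL SLt m a \<epsilon> :: real
  assumes "N \<le> - 20 * m + 2 * a * S - a * SL + \<epsilon> * SL" and "a * S \<le> 2 / 5 * m"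
    and "\<epsilon> \<le> a / 2" and "0 \<le> SL" and "0 \<le> SLt" and "SLt \<le> 2 * SL"
    and "0 < a" and "a \<le> 1 / 2" and "1 \<le> m"
  shows "N / (100 * m + SLt) \<le> - a / 4"
proof -
  have "\<epsilon> * SL \<le> a * SL / 2" using mult_right_mono[OF assms(3,4)] by simp
  moreover have "a * SLt \<le> 2 * (a * SL)" using assms(6,7) by simp
  moreover have "a * m \<le> m / 2" using mult_right_mono[OF assms(8)] assms(9) by simp
  moreover have "- a / 4 * (100 * m + SLt) = - 25 * (a * m) - a * SLt / 4"
    and "2 * a * S = 2 * (a * S)" by (simp_all add: algebra_simps)
  ultimately have "N \<le> - a / 4 * (100 * m + SLt)" using assms(1,2,9) by linarith
  moreover have "0 < 100 * m + SLt" using assms(5,9) by simp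
  ultimately show ?thesis by (simp add: pos_divide_le_eq)
qed

theorem lemma4p7:
  fixes tail head :: "'e::finite \<Rightarrow> 'v::finite"
    and d :: "'v \<Rightarrow> int" and ulo uhi c :: "'e \<Rightarrow> int" and U :: nat
    and fs f gt lt :: "'e \<Rightarrow> real" and \<epsilon> :: real
  defines "m \<equiv> CARD('e)"
  defines "\<alpha> \<equiv> alpha m (real U)"
  defines "Fs \<equiv> cost c fs"
  assumes bounds: "\<forall>v. \<bar>d v\<bar> \<le> int U" "\<forall>e. \<bar>ulo e\<bar> \<le> int U" "\<forall>e. \<bar>uhi e\<bar> \<le> int U"
      "\<forall>e. \<bar>c e\<bar> \<le> int U"
    and opt: "is_min_cost_flow tail head d ulo uhi c fs"
    and route: "routes tail head d f"
    and strict: "\<forall>e. real_of_int (ulo e) < f e \<and> f e < real_of_int (uhi e)"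
    and gap: "cost c f > Fs"
    and grad_err: "\<forall>e. \<bar>gt e - grad \<alpha> ulo uhi c Fs f e\<bar> / lengths \<alpha> ulo uhi f e \<le> \<epsilon>"
    and eps: "\<epsilon> < \<alpha> / 2"
    and lt_pos: "\<forall>e. lt e > 0"
    and lt_approx: "approx_within 2 lt (lengths \<alpha> ulo uhi f)"
    and pot: "Phi \<alpha> ulo uhi c Fs f \<le> 200 * real m * ln (real m * real U)"
    and gaplow: "ln (cost c f - Fs) \<ge> -10 * ln (real m * real U)"
  shows "(\<Sum>e\<in>UNIV. gt e * (fs e - f e)) / (100 * real m + (\<Sum>e\<in>UNIV. lt e * \<bar>fs e - f e\<bar>))
           \<le> - \<alpha> / 4"
proof -
  let ?L = "lengths \<alpha> ulo uhi f"
  let ?G = "grad \<alpha> ulo uhi c Fs f"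
  let ?SL = "\<Sum>e\<in>UNIV. ?L e * \<bar>fs e - f e\<bar>"
  have L_pos: "?L e > 0" for e using strict by (simp add: lengths_pos)
  have "0 \<le> \<epsilon>"
    using order_trans[OF divide_nonneg_pos[OF abs_ge_zero L_pos] grad_err[rule_format]] .
  then have \<alpha>_pos: "\<alpha> > 0" using eps by simp
  have fs_box: "\<forall>e. real_of_int (ulo e) \<le> fs e \<and> fs e \<le> real_of_int (uhi e)"
    using opt by (simp add: is_min_cost_flow_def feasible_flow_def)
  have "(\<Sum>e\<in>UNIV. ?G e * (fs e - f e)) \<le> - 20 * real m + 2 * \<alpha> * barrier \<alpha> ulo uhi f - \<alpha> * ?SL"
    using grad_inner_step_le[OF strict fs_box _ less_imp_le[OF \<alpha>_pos]] gap
    unfolding m_def Fs_def by simp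
  moreover have "(\<Sum>e\<in>UNIV. gt e * (fs e - f e)) \<le> (\<Sum>e\<in>UNIV. ?G e * (fs e - f e)) + \<epsilon> * ?SL"
    using grad_err L_pos by (intro inner_le_if_grad_close) (simp add: divide_le_eq)
  ultimately have "(\<Sum>e\<in>UNIV. gt e * (fs e - f e))
      \<le> - 20 * real m + 2 * \<alpha> * barrier \<alpha> ulo uhi f - \<alpha> * ?SL + \<epsilon> * ?SL"
    by linarith
  moreover have "\<alpha> * barrier \<alpha> ulo uhi f \<le> 2 / 5 * real m"
    using alpha_barrier_le_if_Phi_le \<alpha>_pos pot gaplow unfolding m_def \<alpha>_def by blast
  moreover have "(\<Sum>e\<in>UNIV. lt e * \<bar>fs e - f e\<bar>) \<le> 2 * ?SL"
    using lt_approx by (rule sum_abs_weighted_le_if_approx)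
  moreover have "0 \<le> ?SL" "0 \<le> (\<Sum>e\<in>UNIV. lt e * \<bar>fs e - f e\<bar>)"
    using L_pos lt_pos by (simp_all add: sum_nonneg less_imp_le)
  moreover have "\<alpha> \<le> 1 / 500" using \<alpha>_pos alpha_posD(2) unfolding \<alpha>_def by blast
  moreover have "1 \<le> real m" unfolding m_def by simp
  ultimately show ?thesis using eps \<alpha>_pos by (intro progress_ratio_le) auto
qed

end
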